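(* $\mathfrak{b}_{\mathrm{game}^*}^{\mathrm{II}} = \mathfrak{c}$. That is, if $\mathcal{A}\subseteq\omega^\omega$ and Player II has a winning strategy in the bounding* game with respect to $\mathcal{A}$, then $|\mathcal{A}|=\mathfrak{c}$ (and such $\mathcal{A}$ of size $\mathfrak{c}$ exist).
   Context: For $\mathcal{A}\subseteq\omega^\omega$, the bounding* game with respect to $\mathcal{A}$ is the infinite two-player game in which, at round $k$, Player I plays $n_k\in\omega$ and then Player II plays $m_k\in\omega$. Player II wins iff $\langle m_k:k\in\omega\rangle\in\mathcal{A}$ and $n_k<m_k$ for infinitely many $k$. $\mathfrak{b}_{\mathrm{game}^*}^{\mathrm{II}}$ is the least $|\mathcal{A}|$ such that Player II has a winning strategy in the bounding* game with respect to $\mathcal{A}$. $\mathfrak{c}=2^{\aleph_0}$. *)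

theory Defs
  imports Main "HOL-Library.Equipollence"
begin

text \<open>A strategy for Player II maps the finite list of Player I's moves so far
  [n_0, ..., n_k] to II's answer m_k (II's own earlier moves are determined by the
  strategy, so this is no loss of generality).\<close>

definition play_II :: "(nat list \<Rightarrow> nat) \<Rightarrow> (nat \<Rightarrow> nat) \<Rightarrow> (nat \<Rightarrow> nat)" where
  "play_II \<sigma> x = (\<lambda>k. \<sigma> (map x [0..<Suc k]))"

definition II_wins_play :: "(nat \<Rightarrow> nat) set \<Rightarrow> (nat \<Rightarrow> nat) \<Rightarrow> (nat \<Rightarrow> nat) \<Rightarrow> bool" where
  "II_wins_play A x m \<longleftrightarrow> m \<in> A \<and> infinite {k. x k < m k}"

definition II_winning_strategy :: "(nat \<Rightarrow> nat) set \<Rightarrow> (nat list \<Rightarrow> nat) \<Rightarrow> bool" where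
  "II_winning_strategy A \<sigma> \<longleftrightarrow> (\<forall>x. II_wins_play A x (play_II \<sigma> x))"

definition II_has_winning_strategy :: "(nat \<Rightarrow> nat) set \<Rightarrow> bool" where
  "II_has_winning_strategy A \<longleftrightarrow> (\<exists>\<sigma>. II_winning_strategy A \<sigma>)"

end

theory Submission
  imports Defs
begin

text \<open>If II wins, then after any finite history h of Player I's moves the strategy must still
  react to I's later moves: otherwise I continues h by always repeating II's (now fixed) answer,
  and II's moves are eventually never larger than I's. So there are two continuations of h of
  equal length on which II answers differently. Iterating this choice along each branch of the
  binary tree gives, for every set S of naturals, a play of I; distinct sets lead to distinct
  answer sequences of II, all of which lie in the set A. Hence A has at least continuum many
  elements, and at most as many as the set of all sequences; the latter is won by answering n + 1
  to n.\<close>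

definition splitting_pair :: "(nat list \<Rightarrow> nat) \<Rightarrow> nat list \<Rightarrow> nat list \<times> nat list \<Rightarrow> bool" where
  "splitting_pair \<sigma> h p \<longleftrightarrow>
     length (fst p) = length (snd p) \<and> fst p \<noteq> [] \<and> \<sigma> (h @ fst p) \<noteq> \<sigma> (h @ snd p)"

lemma splitting_pair_exists:
  assumes beats: "\<And>x. infinite {k. x k < play_II \<sigma> x k}"
  shows "\<exists>p. splitting_pair \<sigma> h p"
proof (rule ccontr)
  assume "\<nexists>p. splitting_pair \<sigma> h p"
  then have insensitive: "\<sigma> (h @ t1) = \<sigma> (h @ t2)"
    if "length t1 = length t2" "t1 \<noteq> []" for t1 t2
    using that unfolding splitting_pair_def by fastforce
  define x where
    "x j = (if j < length h then h ! j else \<sigma> (h @ replicate (Suc j - length h) 0))" for j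
  have map_x_h: "map x [0..<length h] = h"
    by (rule nth_equalityI) (auto simp: x_def)
  have copies: "play_II \<sigma> x j = x j" if "length h \<le> j" for j
  proof -
    have "[0..<Suc j] = [0..<length h] @ [length h..<Suc j]"
      using that upt_add_eq_append[of 0 "length h" "Suc j - length h"] by simp
    then have "map x [0..<Suc j] = h @ map x [length h..<Suc j]"
      using map_x_h by simp
    moreover have "\<sigma> (h @ map x [length h..<Suc j]) = \<sigma> (h @ replicate (Suc j - length h) 0)"
      by (rule insensitive) (use that in auto)
    ultimately show ?thesis
      using that by (simp add: play_II_def x_def)
  qed
  have "{k. x k < play_II \<sigma> x k} \<subseteq> {..<length h}"
  proof
    fix k
    assume "k \<in> {k. x k < play_II \<sigma> x k}"
    then show "k \<in> {..<length h}"
      using copies[of k] by (cases "length h \<le> k") auto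
  qed
  then show False
    using beats finite_subset by blast
qed

definition some_splitting_pair :: "(nat list \<Rightarrow> nat) \<Rightarrow> nat list \<Rightarrow> nat list \<times> nat list" where
  "some_splitting_pair \<sigma> h = (SOME p. splitting_pair \<sigma> h p)"

fun branch :: "(nat list \<Rightarrow> nat) \<Rightarrow> nat set \<Rightarrow> nat \<Rightarrow> nat list" where
  "branch \<sigma> S 0 = []"
| "branch \<sigma> S (Suc n) = branch \<sigma> S n @
     (if n \<in> S then fst (some_splitting_pair \<sigma> (branch \<sigma> S n))
      else snd (some_splitting_pair \<sigma> (branch \<sigma> S n)))"

definition branch_moves :: "(nat list \<Rightarrow> nat) \<Rightarrow> nat set \<Rightarrow> nat \<Rightarrow> nat" where
  "branch_moves \<sigma> S k = branch \<sigma> S (Suc k) ! k"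

lemma branch_prefix: "m \<le> n \<Longrightarrow> \<exists>t. branch \<sigma> S n = branch \<sigma> S m @ t"
  by (induction n) (auto simp: le_Suc_eq)

lemma branch_cong: "(\<And>j. j < n \<Longrightarrow> j \<in> S \<longleftrightarrow> j \<in> T) \<Longrightarrow> branch \<sigma> S n = branch \<sigma> T n"
  by (induction n) auto

context
  fixes \<sigma> :: "nat list \<Rightarrow> nat"
  assumes splitting: "\<And>h. \<exists>p. splitting_pair \<sigma> h p"
begin

lemma splitting_pair_some: "splitting_pair \<sigma> h (some_splitting_pair \<sigma> h)"
  unfolding some_splitting_pair_def using splitting by (rule someI_ex)

lemma length_branch_ge: "n \<le> length (branch \<sigma> S n)"
proof (induction n)
  case (Suc n)
  have "0 < length (fst (some_splitting_pair \<sigma> (branch \<sigma> S n)))"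
       "0 < length (snd (some_splitting_pair \<sigma> (branch \<sigma> S n)))"
    using splitting_pair_some[of "branch \<sigma> S n"] unfolding splitting_pair_def by auto
  with Suc show ?case
    by (auto simp del: length_greater_0_conv)
qed simp

lemma nth_branch: "k < length (branch \<sigma> S n) \<Longrightarrow> branch \<sigma> S n ! k = branch_moves \<sigma> S k"
proof -
  assume k: "k < length (branch \<sigma> S n)"
  have k': "k < length (branch \<sigma> S (Suc k))"
    using length_branch_ge[of "Suc k" S] by simp
  consider "n \<le> Suc k" | "Suc k \<le> n" by linarith
  then show ?thesis
  proof cases
    case 1
    then obtain t where "branch \<sigma> S (Suc k) = branch \<sigma> S n @ t"
      using branch_prefix by blast
    then show ?thesis
      using k by (simp add: branch_moves_def nth_append del: branch.simps)
  next
    case 2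
    then obtain t where "branch \<sigma> S n = branch \<sigma> S (Suc k) @ t"
      using branch_prefix by blast
    then show ?thesis
      using k' by (simp add: branch_moves_def nth_append del: branch.simps)
  qed
qed

lemma play_II_branch_moves:
  assumes "0 < n"
  shows "play_II \<sigma> (branch_moves \<sigma> S) (length (branch \<sigma> S n) - 1) = \<sigma> (branch \<sigma> S n)"
proof -
  have "map (branch_moves \<sigma> S) [0..<length (branch \<sigma> S n)] = branch \<sigma> S n"
    by (rule nth_equalityI) (auto simp: nth_branch)
  moreover have last_index: "Suc (length (branch \<sigma> S n) - 1) = length (branch \<sigma> S n)"
    using length_branch_ge[of n S] assms by simp
  ultimately show ?thesis
    unfolding play_II_def last_index by simp
qed

lemma inj_play_II_branch_moves: "inj (\<lambda>S. play_II \<sigma> (branch_moves \<sigma> S))"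
proof (rule injI, rule ccontr)
  fix S T
  assume same_play: "play_II \<sigma> (branch_moves \<sigma> S) = play_II \<sigma> (branch_moves \<sigma> T)"
    and "S \<noteq> T"
  then obtain i0 where "(i0 \<in> S) \<noteq> (i0 \<in> T)" by blast
  define i where "i = (LEAST i. (i \<in> S) \<noteq> (i \<in> T))"
  have differ: "(i \<in> S) \<noteq> (i \<in> T)"
    unfolding i_def by (rule LeastI) fact
  have "j \<in> S \<longleftrightarrow> j \<in> T" if "j < i" for j
    using that not_less_Least unfolding i_def by blast
  then have common: "branch \<sigma> T i = branch \<sigma> S i"
    by (rule branch_cong[symmetric])
  define h where "h = branch \<sigma> S i"
  obtain t1 t2 where p: "some_splitting_pair \<sigma> h = (t1, t2)" by fastforce
  have split: "length t1 = length t2" "\<sigma> (h @ t1) \<noteq> \<sigma> (h @ t2)"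
    using splitting_pair_some[of h] p unfolding splitting_pair_def by auto
  have S_step: "branch \<sigma> S (Suc i) = h @ (if i \<in> S then t1 else t2)"
    using p h_def by simp
  have T_step: "branch \<sigma> T (Suc i) = h @ (if i \<in> S then t2 else t1)"
    using p h_def common differ by auto
  have same_length: "length (branch \<sigma> S (Suc i)) = length (branch \<sigma> T (Suc i))"
    using S_step T_step split(1) by (simp del: branch.simps)
  have "\<sigma> (branch \<sigma> S (Suc i)) = \<sigma> (branch \<sigma> T (Suc i))"
    using play_II_branch_moves[of "Suc i" S] play_II_branch_moves[of "Suc i" T]
      same_play same_length by simp
  then show False
    using S_step T_step split(2) by (simp del: branch.simps split: if_splits)
qed

end

lemma Pow_lepoll_winning_set:
  assumes "II_winning_strategy A \<sigma>"
  shows "Pow (UNIV :: nat set) \<lesssim> A"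
proof -
  have "\<exists>p. splitting_pair \<sigma> h p" for h
    using assms splitting_pair_exists
    unfolding II_winning_strategy_def II_wins_play_def by blast
  then have "inj (\<lambda>S. play_II \<sigma> (branch_moves \<sigma> S))"
    by (rule inj_play_II_branch_moves)
  moreover have "play_II \<sigma> (branch_moves \<sigma> S) \<in> A" for S
    using assms unfolding II_winning_strategy_def II_wins_play_def by blast
  ultimately show ?thesis
    unfolding lepoll_def Pow_UNIV by blast
qed

lemma nat_fun_lepoll_Pow: "(UNIV :: (nat \<Rightarrow> nat) set) \<lesssim> Pow (UNIV :: nat set)"
  unfolding lepoll_def
proof (intro exI conjI)
  show "inj_on (\<lambda>f. range (\<lambda>n. prod_encode (n, f n))) UNIV"
  proof (rule inj_onI, rule ext)
    fix f g :: "nat \<Rightarrow> nat" and n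
    assume "range (\<lambda>n. prod_encode (n, f n)) = range (\<lambda>n. prod_encode (n, g n))"
    then have "prod_encode (n, f n) \<in> range (\<lambda>n. prod_encode (n, g n))" by blast
    then obtain m where "prod_encode (n, f n) = prod_encode (m, g m)" by auto
    then show "f n = g n"
      by (auto dest: inj_onD[OF inj_prod_encode])
  qed
qed auto

lemma II_winning_strategy_UNIV: "II_winning_strategy UNIV (\<lambda>l. Suc (last l))"
  unfolding II_winning_strategy_def II_wins_play_def by (simp add: play_II_def)

lemma winning_set_eqpoll_Pow:
  assumes "II_has_winning_strategy A"
  shows "A \<approx> Pow (UNIV :: nat set)"
proof (rule lepoll_antisym)
  have "A \<lesssim> (UNIV :: (nat \<Rightarrow> nat) set)"
    by (rule subset_imp_lepoll) simp
  then show "A \<lesssim> Pow (UNIV :: nat set)"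
    using nat_fun_lepoll_Pow by (rule lepoll_trans)
  from assms obtain \<sigma> where "II_winning_strategy A \<sigma>"
    unfolding II_has_winning_strategy_def by blast
  then show "Pow (UNIV :: nat set) \<lesssim> A"
    by (rule Pow_lepoll_winning_set)
qed

theorem mainTheorem3:
  shows "(\<forall>A :: (nat \<Rightarrow> nat) set. II_has_winning_strategy A \<longrightarrow> A \<approx> Pow (UNIV :: nat set))
       \<and> (\<exists>A :: (nat \<Rightarrow> nat) set. II_has_winning_strategy A \<and> A \<approx> Pow (UNIV :: nat set))"
proof (intro conjI allI impI exI)
  show "A \<approx> Pow (UNIV :: nat set)" if "II_has_winning_strategy A" for A :: "(nat \<Rightarrow> nat) set"
    using that by (rule winning_set_eqpoll_Pow)
  show "II_has_winning_strategy (UNIV :: (nat \<Rightarrow> nat) set)"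
    unfolding II_has_winning_strategy_def using II_winning_strategy_UNIV by blast
  then show "(UNIV :: (nat \<Rightarrow> nat) set) \<approx> Pow (UNIV :: nat set)"
    by (rule winning_set_eqpoll_Pow)
qed

end
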